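(* Let $\mathcal T=(\mathcal S,\to)$ be an LTS over $\Sigma$, $\mathcal V$ a valuation, $\Phi$ a fixpoint-free well-formed formula in positive normal form, and $S\subseteq\mathcal S$ with $S\subseteq[\![\Phi]\!]_{\mathcal V}$. Then there is a successful tableau in tableau normal form whose root is labelled by $S\vdash^{\mathcal T}_{\mathcal V,\varepsilon}\Phi$ ($\varepsilon$ the empty definition list).
   Context: Fix a set $\Sigma$ and a countably infinite set $\mathrm{Var}$ of variables. An LTS is $\mathcal T=(\mathcal S,\to)$ with ${\to}\subseteq\mathcal S\times\Sigma\times\mathcal S$; $s\xrightarrow{K}s'$ means $s\xrightarrow{a}s'$ for some $a\in K$. A valuation is $\mathcal V:\mathrm{Var}\to 2^{\mathcal S}$. Formulas: $\Phi::=Z\mid\neg\Phi\mid\Phi_1\wedge\Phi_2\mid[K]\Phi\mid\nu Z.\Phi$, well-formed if in each $\nu Z.\Phi$ every free occurrence of $Z$ in $\Phi$ is under an even number of negations. Derived: $\vee$, $\langle K\rangle\Phi=\neg[K]\neg\Phi$, $\mu Z.\Phi=\neg\nu Z.\neg\Phi[Z:=\neg Z]$. Semantics: $[\![Z]\!]_{\mathcal V}=\mathcal V(Z)$, negation = complement, $\wedge$ = intersection, $[\![[K]\Phi]\!]_{\mathcal V}=\{s\mid\forall s'.\ s\xrightarrow{K}s'\Rightarrow s'\in[\![\Phi]\!]_{\mathcal V}\}$, $[\![\nu Z.\Phi]\!]_{\mathcal V}=\bigcup\{S'\mid S'\subseteq[\![\Phi]\!]_{\mathcal V[Z:=S']}\}$.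 Positive normal form: built from $Z,\neg Z,\wedge,\vee,[K],\langle K\rangle,\nu,\mu$. A formula is fixpoint-free if it has no subformula of the form $\nu Z.\Psi$ or $\mu Z.\Psi$. Definition list $\Delta=(U_1=\Phi_1)\cdots(U_n=\Phi_n)$: distinct $U_i$, no $U_i$ bound in any $\Phi_j$, $U_j$ not free in $\Phi_i$ for $i\le j$. Sequent $S\vdash^{\mathcal T}_{\mathcal V,\Delta}\Phi$: $S\subseteq\mathcal S$, $\Phi$ in positive normal form, every $U\in\mathrm{dom}(\Delta)$ positive and not bound in $\Phi$. Rules (conclusion; premises): ($\wedge$) $S\vdash_\Delta\Phi_1\wedge\Phi_2$; $S\vdash_\Delta\Phi_1$, $S\vdash_\Delta\Phi_2$. ($\vee$) $S\vdash_\Delta\Phi_1\vee\Phi_2$; $S_1\vdash_\Delta\Phi_1$, $S_2\vdash_\Delta\Phi_2$, $S=S_1\cup S_2$. ($[K]$) $S\vdash_\Delta[K]\Phi$; $\{s'\mid\exists s\in S.\ s\xrightarrow{K}s'\}\vdash_\Delta\Phi$. ($\langle K\rangle$, witness $f:S\to\mathcal S$, $s\xrightarrow{K}f(s)$) $S\vdash_\Delta\langle K\rangle\Phi$; $f(S)\vdash_\Delta\Phi$. ($\sigma Z$) $S\vdash_\Delta\sigma Z.\Phi$; $S\vdash_{\Delta\cdot(U=\sigma Z.\Phi)}U$, $U$ fresh. (Un) $S\vdash_\Delta U$; $S\vdash_\Delta\Phi[Z:=U]$, $\Delta(U)=\sigma Z.\Phi$. (Thin) $S\vdash_\Delta\Phi$;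 $S'\vdash_\Delta\Phi$, $S\subseteq S'$. A tableau is a finite nonempty ordered tree of nodes labelled by sequents over $\mathcal T,\mathcal V$, each internal node labelled by a rule application (plus witness function for $\langle K\rangle$) forming a rule instance with its ordered children, whose root has empty definition list and whose leaves $n$ (sequent $S_n\vdash_\Delta\Phi$) are terminal: (a) $\Phi\in\{Z,\neg Z\}$, $Z\notin\mathrm{dom}(\Delta)$; (b) $\Phi=\langle K\rangle\Psi$ and some $s\in S_n$ has no $K$-successor (diamond leaf); (c) $\Phi=U\in\mathrm{dom}(\Delta)$ and some strict ancestor $m$ has formula $U$ with $S_n\subseteq S_m$ ($\mu$-/$\nu$-leaf according to $\Delta(U)$). Companion nodes: nodes with rule Un; companion leaves of $m$: leaves strictly below $m$ with the same formula and $S_n\subseteq S_m$, excluding companion leaves of companion nodes strictly below $m$. For a child $n'$ of $n$: $s'<_{n',n}s$ iff $s'\in S_{n'}$, $s\in S_n$ and (rule $[K]$, $s\xrightarrow{K}s'$) or (rule $(\langle K\rangle,f)$, $s'=f(s)$) or (other rule, $s'=s$). $\lessdot_{n',n}$ is least with $s\lessdot_{n,n}s$ and ($s'\lessdot_{n',m}s''$, $s''<_{m,n}s$)$\Rightarrow s'\lessdot_{n',n}s$. $<:_{n',n}$, $<:_m$ are least with: $s'<:_m s$ iff some companion leaf $m'$ of $m$ has $s'\in S_{m'}$, $s'<:_{m',m}s$; $s'<:_{n',n}s$ iff $s'\in S_{n'}$, $s\in S_n$, and $s'\lessdot_{n',n}s$ or some companion node $m\notin\{n,n'\}$ and $t,t'\in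 S_m$ satisfy $s'<:_{n',m}t'$, $t'(<:_m)^+t$, $t\lessdot_{m,n}s$. A leaf is successful iff: formula $Z$ and $S_n\subseteq\mathcal V(Z)$; or $\neg Z$ and $S_n\cap\mathcal V(Z)=\emptyset$; or $\nu$-leaf; or $\mu$-leaf whose companion node $m$ has $<:_m$ well-founded. A successful tableau has all leaves successful. Tableau normal form (TNF): the tableau is (i) thinning-restricted: the root's rule is not Thin, and for every non-root node $n$, the rule at $n$ is $\sigma Z$ iff the rule at the parent of $n$ is Thin; (ii) unfolding-limited: for each definitional constant $U$ appearing in the tableau there is exactly one node with formula $U$ and rule Un; (iii) irredundant: for each node with rule $\vee$ and children $n_1,n_2$, $S_{n_1}\cap S_{n_2}=\emptyset$. *)

theory Defs
  imports Main "HOL-Library.Sublist" "HOL-Library.Countable"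
begin

section \<open>Core modal mu-calculus syntax and semantics\<close>

text \<open>LTS: a transition relation over states of type 's and actions of type 'a
  (the state set is the universe of 's, Sigma is the universe of 'a).\<close>

type_synonym ('s,'a) lts = "('s \<times> 'a \<times> 's) set"

datatype ('a,'v) fml =
    FVar 'v
  | FNeg "('a,'v) fml"
  | FConj "('a,'v) fml" "('a,'v) fml"
  | FBox "'a set" "('a,'v) fml"
  | FNu 'v "('a,'v) fml"

primrec sem :: "('s,'a) lts \<Rightarrow> ('v \<Rightarrow> 's set) \<Rightarrow> ('a,'v) fml \<Rightarrow> 's set" where
  "sem T V (FVar Z) = V Z"
| "sem T V (FNeg \<phi>) = - sem T V \<phi>"
| "sem T V (FConj \<phi> \<psi>) = sem T V \<phi> \<inter> sem T V \<psi>"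
| "sem T V (FBox K \<phi>) = {s. \<forall>a s'. a \<in> K \<and> (s, a, s') \<in> T \<longrightarrow> s' \<in> sem T V \<phi>}"
| "sem T V (FNu Z \<phi>) = \<Union>{S'. S' \<subseteq> sem T (V(Z := S')) \<phi>}"

text \<open>odd_occ Z b phi: there is a free occurrence of Z in phi under an odd number of
  negations, where b records whether we are already under an odd number of negations.\<close>
primrec odd_occ :: "'v \<Rightarrow> bool \<Rightarrow> ('a,'v) fml \<Rightarrow> bool" where
  "odd_occ Z b (FVar Y) = (Y = Z \<and> b)"
| "odd_occ Z b (FNeg \<phi>) = odd_occ Z (\<not> b) \<phi>"
| "odd_occ Z b (FConj \<phi> \<psi>) = (odd_occ Z b \<phi> \<or> odd_occ Z b \<psi>)"
| "odd_occ Z b (FBox K \<phi>) = odd_occ Z b \<phi>"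
| "odd_occ Z b (FNu Y \<phi>) = (Y \<noteq> Z \<and> odd_occ Z b \<phi>)"

primrec well_formed :: "('a,'v) fml \<Rightarrow> bool" where
  "well_formed (FVar Z) = True"
| "well_formed (FNeg \<phi>) = well_formed \<phi>"
| "well_formed (FConj \<phi> \<psi>) = (well_formed \<phi> \<and> well_formed \<psi>)"
| "well_formed (FBox K \<phi>) = well_formed \<phi>"
| "well_formed (FNu Z \<phi>) = (well_formed \<phi> \<and> \<not> odd_occ Z False \<phi>)"

primrec negsub :: "'v \<Rightarrow> ('a,'v) fml \<Rightarrow> ('a,'v) fml" where
  "negsub Z (FVar Y) = (if Y = Z then FNeg (FVar Y) else FVar Y)"
| "negsub Z (FNeg \<phi>) = FNeg (negsub Z \<phi>)"
| "negsub Z (FConj \<phi> \<psi>) = FConj (negsub Z \<phi>) (negsub Z \<psi>)"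
| "negsub Z (FBox K \<phi>) = FBox K (negsub Z \<phi>)"
| "negsub Z (FNu Y \<phi>) = (if Y = Z then FNu Y \<phi> else FNu Y (negsub Z \<phi>))"

definition fdisj :: "('a,'v) fml \<Rightarrow> ('a,'v) fml \<Rightarrow> ('a,'v) fml" where
  "fdisj \<phi> \<psi> = FNeg (FConj (FNeg \<phi>) (FNeg \<psi>))"
definition fdia :: "'a set \<Rightarrow> ('a,'v) fml \<Rightarrow> ('a,'v) fml" where
  "fdia K \<phi> = FNeg (FBox K (FNeg \<phi>))"
definition fmu :: "'v \<Rightarrow> ('a,'v) fml \<Rightarrow> ('a,'v) fml" where
  "fmu Z \<phi> = FNeg (FNu Z (FNeg (negsub Z \<phi>)))"

section \<open>Positive normal form\<close>

datatype ('a,'v) pnf =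
    PVar 'v
  | PNVar 'v
  | PConj "('a,'v) pnf" "('a,'v) pnf"
  | PDisj "('a,'v) pnf" "('a,'v) pnf"
  | PBox "'a set" "('a,'v) pnf"
  | PDia "'a set" "('a,'v) pnf"
  | PNu 'v "('a,'v) pnf"
  | PMu 'v "('a,'v) pnf"

primrec to_fml :: "('a,'v) pnf \<Rightarrow> ('a,'v) fml" where
  "to_fml (PVar Z) = FVar Z"
| "to_fml (PNVar Z) = FNeg (FVar Z)"
| "to_fml (PConj \<phi> \<psi>) = FConj (to_fml \<phi>) (to_fml \<psi>)"
| "to_fml (PDisj \<phi> \<psi>) = fdisj (to_fml \<phi>) (to_fml \<psi>)"
| "to_fml (PBox K \<phi>) = FBox K (to_fml \<phi>)"
| "to_fml (PDia K \<phi>) = fdia K (to_fml \<phi>)"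
| "to_fml (PNu Z \<phi>) = FNu Z (to_fml \<phi>)"
| "to_fml (PMu Z \<phi>) = fmu Z (to_fml \<phi>)"

primrec fixpoint_free :: "('a,'v) pnf \<Rightarrow> bool" where
  "fixpoint_free (PVar Z) = True"
| "fixpoint_free (PNVar Z) = True"
| "fixpoint_free (PConj \<phi> \<psi>) = (fixpoint_free \<phi> \<and> fixpoint_free \<psi>)"
| "fixpoint_free (PDisj \<phi> \<psi>) = (fixpoint_free \<phi> \<and> fixpoint_free \<psi>)"
| "fixpoint_free (PBox K \<phi>) = fixpoint_free \<phi>"
| "fixpoint_free (PDia K \<phi>) = fixpoint_free \<phi>"
| "fixpoint_free (PNu Z \<phi>) = False"
| "fixpoint_free (PMu Z \<phi>) = False"

primrec pvars :: "('a,'v) pnf \<Rightarrow> 'v set" where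
  "pvars (PVar Z) = {Z}"
| "pvars (PNVar Z) = {Z}"
| "pvars (PConj \<phi> \<psi>) = pvars \<phi> \<union> pvars \<psi>"
| "pvars (PDisj \<phi> \<psi>) = pvars \<phi> \<union> pvars \<psi>"
| "pvars (PBox K \<phi>) = pvars \<phi>"
| "pvars (PDia K \<phi>) = pvars \<phi>"
| "pvars (PNu Z \<phi>) = insert Z (pvars \<phi>)"
| "pvars (PMu Z \<phi>) = insert Z (pvars \<phi>)"

primrec pbound :: "('a,'v) pnf \<Rightarrow> 'v set" where
  "pbound (PVar Z) = {}"
| "pbound (PNVar Z) = {}"
| "pbound (PConj \<phi> \<psi>) = pbound \<phi> \<union> pbound \<psi>"
| "pbound (PDisj \<phi> \<psi>) = pbound \<phi> \<union> pbound \<psi>"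
| "pbound (PBox K \<phi>) = pbound \<phi>"
| "pbound (PDia K \<phi>) = pbound \<phi>"
| "pbound (PNu Z \<phi>) = insert Z (pbound \<phi>)"
| "pbound (PMu Z \<phi>) = insert Z (pbound \<phi>)"

primrec pfree :: "('a,'v) pnf \<Rightarrow> 'v set" where
  "pfree (PVar Z) = {Z}"
| "pfree (PNVar Z) = {Z}"
| "pfree (PConj \<phi> \<psi>) = pfree \<phi> \<union> pfree \<psi>"
| "pfree (PDisj \<phi> \<psi>) = pfree \<phi> \<union> pfree \<psi>"
| "pfree (PBox K \<phi>) = pfree \<phi>"
| "pfree (PDia K \<phi>) = pfree \<phi>"
| "pfree (PNu Z \<phi>) = pfree \<phi> - {Z}"
| "pfree (PMu Z \<phi>) = pfree \<phi> - {Z}"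

primrec pfree_neg :: "('a,'v) pnf \<Rightarrow> 'v set" where
  "pfree_neg (PVar Z) = {}"
| "pfree_neg (PNVar Z) = {Z}"
| "pfree_neg (PConj \<phi> \<psi>) = pfree_neg \<phi> \<union> pfree_neg \<psi>"
| "pfree_neg (PDisj \<phi> \<psi>) = pfree_neg \<phi> \<union> pfree_neg \<psi>"
| "pfree_neg (PBox K \<phi>) = pfree_neg \<phi>"
| "pfree_neg (PDia K \<phi>) = pfree_neg \<phi>"
| "pfree_neg (PNu Z \<phi>) = pfree_neg \<phi> - {Z}"
| "pfree_neg (PMu Z \<phi>) = pfree_neg \<phi> - {Z}"

primrec psubst :: "'v \<Rightarrow> 'v \<Rightarrow> ('a,'v) pnf \<Rightarrow> ('a,'v) pnf" where
  "psubst Z U (PVar Y) = PVar (if Y = Z then U else Y)"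
| "psubst Z U (PNVar Y) = PNVar (if Y = Z then U else Y)"
| "psubst Z U (PConj \<phi> \<psi>) = PConj (psubst Z U \<phi>) (psubst Z U \<psi>)"
| "psubst Z U (PDisj \<phi> \<psi>) = PDisj (psubst Z U \<phi>) (psubst Z U \<psi>)"
| "psubst Z U (PBox K \<phi>) = PBox K (psubst Z U \<phi>)"
| "psubst Z U (PDia K \<phi>) = PDia K (psubst Z U \<phi>)"
| "psubst Z U (PNu Y \<phi>) = PNu Y (if Y = Z then \<phi> else psubst Z U \<phi>)"
| "psubst Z U (PMu Y \<phi>) = PMu Y (if Y = Z then \<phi> else psubst Z U \<phi>)"

definition is_fix :: "('a,'v) pnf \<Rightarrow> bool" where
  "is_fix \<phi> \<longleftrightarrow> (\<exists>Z \<psi>. \<phi> = PNu Z \<psi> \<or> \<phi> = PMu Z \<psi>)"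

section \<open>Definition lists and sequents\<close>

type_synonym ('a,'v) deflist = "('v \<times> ('a,'v) pnf) list"

definition ddom :: "('a,'v) deflist \<Rightarrow> 'v set" where
  "ddom \<Delta> = fst ` set \<Delta>"

definition deflist_ok :: "('a,'v) deflist \<Rightarrow> bool" where
  "deflist_ok \<Delta> \<longleftrightarrow>
     distinct (map fst \<Delta>) \<and>
     (\<forall>i < length \<Delta>. is_fix (snd (\<Delta> ! i))) \<and>
     (\<forall>i < length \<Delta>. \<forall>j < length \<Delta>. fst (\<Delta> ! i) \<notin> pbound (snd (\<Delta> ! j))) \<and>
     (\<forall>i < length \<Delta>. \<forall>j < length \<Delta>. i \<le> j \<longrightarrow> fst (\<Delta> ! j) \<notin> pfree (snd (\<Delta> ! i)))"

type_synonym ('s,'a,'v) seq = "'s set \<times> ('a,'v) deflist \<times> ('a,'v) pnf"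

definition seq_ok :: "('s,'a,'v) seq \<Rightarrow> bool" where
  "seq_ok sq = (case sq of (S, \<Delta>, \<Phi>) \<Rightarrow>
     deflist_ok \<Delta> \<and> (\<forall>U \<in> ddom \<Delta>. U \<notin> pfree_neg \<Phi> \<and> U \<notin> pbound \<Phi>))"

section \<open>Rules and tableaux\<close>

datatype 's rl = RAnd | ROr | RBox | RDia "'s \<Rightarrow> 's" | RSigma | RUn | RThin

definition succs :: "('s,'a) lts \<Rightarrow> 'a set \<Rightarrow> 's set \<Rightarrow> 's set" where
  "succs T K S = {s'. \<exists>s \<in> S. \<exists>a \<in> K. (s, a, s') \<in> T}"

definition fresh :: "'v \<Rightarrow> ('a,'v) deflist \<Rightarrow> ('a,'v) pnf \<Rightarrow> bool" where
  "fresh U \<Delta> \<Phi> \<longleftrightarrow> U \<notin> ddom \<Delta> \<and> U \<notin> pvars \<Phi>"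

text \<open>rule_inst T conclusion rule premises: the rule instance relation.\<close>
definition rule_inst :: "('s,'a) lts \<Rightarrow> ('s,'a,'v) seq \<Rightarrow> 's rl \<Rightarrow> ('s,'a,'v) seq list \<Rightarrow> bool" where
  "rule_inst T sq r cs = (case sq of (S, \<Delta>, \<Phi>) \<Rightarrow> (case r of
      RAnd \<Rightarrow> (\<exists>\<Phi>1 \<Phi>2. \<Phi> = PConj \<Phi>1 \<Phi>2 \<and> cs = [(S, \<Delta>, \<Phi>1), (S, \<Delta>, \<Phi>2)])
    | ROr \<Rightarrow> (\<exists>\<Phi>1 \<Phi>2 S1 S2. \<Phi> = PDisj \<Phi>1 \<Phi>2 \<and> S = S1 \<union> S2 \<and>
                 cs = [(S1, \<Delta>, \<Phi>1), (S2, \<Delta>, \<Phi>2)])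
    | RBox \<Rightarrow> (\<exists>K \<Psi>. \<Phi> = PBox K \<Psi> \<and> cs = [(succs T K S, \<Delta>, \<Psi>)])
    | RDia f \<Rightarrow> (\<exists>K \<Psi>. \<Phi> = PDia K \<Psi> \<and> (\<forall>s \<in> S. \<exists>a \<in> K. (s, a, f s) \<in> T) \<and>
                 cs = [(f ` S, \<Delta>, \<Psi>)])
    | RSigma \<Rightarrow> (\<exists>U. is_fix \<Phi> \<and> fresh U \<Delta> \<Phi> \<and> cs = [(S, \<Delta> @ [(U, \<Phi>)], PVar U)])
    | RUn \<Rightarrow> (\<exists>U Z \<Psi>. \<Phi> = PVar U \<and>
                 (map_of \<Delta> U = Some (PNu Z \<Psi>) \<or> map_of \<Delta> U = Some (PMu Z \<Psi>)) \<and>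
                 cs = [(S, \<Delta>, psubst Z U \<Psi>)])
    | RThin \<Rightarrow> (\<exists>S'. S \<subseteq> S' \<and> cs = [(S', \<Delta>, \<Phi>)])))"

text \<open>Finite ordered trees; each node carries a sequent, optionally a rule (None at leaves),
  and its ordered list of children.  Nodes are addressed by paths (nat lists).\<close>
datatype ('s,'a,'v) tab = Nd "('s,'a,'v) seq" "'s rl option" "('s,'a,'v) tab list"

fun seq_of :: "('s,'a,'v) tab \<Rightarrow> ('s,'a,'v) seq" where "seq_of (Nd l r ts) = l"
fun rule_of :: "('s,'a,'v) tab \<Rightarrow> 's rl option" where "rule_of (Nd l r ts) = r"
fun kids_of :: "('s,'a,'v) tab \<Rightarrow> ('s,'a,'v) tab list" where "kids_of (Nd l r ts) = ts"

fun subt :: "('s,'a,'v) tab \<Rightarrow> nat list \<Rightarrow> ('s,'a,'v) tab option" where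
  "subt t [] = Some t"
| "subt (Nd l r ts) (i # p) = (if i < length ts then subt (ts ! i) p else None)"

definition pos :: "('s,'a,'v) tab \<Rightarrow> nat list set" where
  "pos t = {p. subt t p \<noteq> None}"

definition lab :: "('s,'a,'v) tab \<Rightarrow> nat list \<Rightarrow> ('s,'a,'v) seq" where
  "lab t p = seq_of (the (subt t p))"
definition rul :: "('s,'a,'v) tab \<Rightarrow> nat list \<Rightarrow> 's rl option" where
  "rul t p = rule_of (the (subt t p))"
definition kids :: "('s,'a,'v) tab \<Rightarrow> nat list \<Rightarrow> ('s,'a,'v) tab list" where
  "kids t p = kids_of (the (subt t p))"

definition Sn :: "('s,'a,'v) tab \<Rightarrow> nat list \<Rightarrow> 's set" where "Sn t p = fst (lab t p)"
definition Dn :: "('s,'a,'v) tab \<Rightarrow> nat list \<Rightarrow> ('a,'v) deflist" where "Dn t p = fst (snd (lab t p))"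
definition Fn :: "('s,'a,'v) tab \<Rightarrow> nat list \<Rightarrow> ('a,'v) pnf" where "Fn t p = snd (snd (lab t p))"

definition is_leaf :: "('s,'a,'v) tab \<Rightarrow> nat list \<Rightarrow> bool" where
  "is_leaf t p \<longleftrightarrow> p \<in> pos t \<and> kids t p = []"

definition has_K_succ :: "('s,'a) lts \<Rightarrow> 'a set \<Rightarrow> 's \<Rightarrow> bool" where
  "has_K_succ T K s \<longleftrightarrow> (\<exists>a \<in> K. \<exists>s'. (s, a, s') \<in> T)"

definition leaf_c :: "('s,'a,'v) tab \<Rightarrow> nat list \<Rightarrow> bool" where
  "leaf_c t n \<longleftrightarrow> (\<exists>U. Fn t n = PVar U \<and> U \<in> ddom (Dn t n) \<and>
      (\<exists>m. strict_prefix m n \<and> Fn t m = PVar U \<and> Sn t n \<subseteq> Sn t m))"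

definition terminal :: "('s,'a) lts \<Rightarrow> ('s,'a,'v) tab \<Rightarrow> nat list \<Rightarrow> bool" where
  "terminal T t n \<longleftrightarrow>
     (\<exists>Z. (Fn t n = PVar Z \<or> Fn t n = PNVar Z) \<and> Z \<notin> ddom (Dn t n)) \<or>
     (\<exists>K \<Psi>. Fn t n = PDia K \<Psi> \<and> (\<exists>s \<in> Sn t n. \<not> has_K_succ T K s)) \<or>
     leaf_c t n"

definition tableau :: "('s,'a) lts \<Rightarrow> ('s,'a,'v) tab \<Rightarrow> bool" where
  "tableau T t \<longleftrightarrow>
     Dn t [] = [] \<and>
     (\<forall>p \<in> pos t. seq_ok (lab t p)) \<and>
     (\<forall>p \<in> pos t. (rul t p = None \<longleftrightarrow> kids t p = []) \<and>
        (\<forall>r. rul t p = Some r \<longrightarrow> rule_inst T (lab t p) r (map seq_of (kids t p)))) \<and>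
     (\<forall>p. is_leaf t p \<longrightarrow> terminal T t p)"

section \<open>Companions and the relations used for success\<close>

definition comp_node :: "('s,'a,'v) tab \<Rightarrow> nat list \<Rightarrow> bool" where
  "comp_node t m \<longleftrightarrow> m \<in> pos t \<and> rul t m = Some RUn"

text \<open>comp_leaf t m n: n is a companion leaf of the companion node m.  The definition is
  recursive: companion leaves of companion nodes strictly below m are excluded.\<close>
function comp_leaf :: "('s,'a,'v) tab \<Rightarrow> nat list \<Rightarrow> nat list \<Rightarrow> bool" where
  "comp_leaf t m n =
     (comp_node t m \<and> is_leaf t n \<and> strict_prefix m n \<and> Fn t n = Fn t m \<and> Sn t n \<subseteq> Sn t m \<and>
      \<not> (\<exists>m'. if strict_prefix m m' \<and> strict_prefix m' n \<and> comp_node t m'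
               then comp_leaf t m' n else False))"
  by auto
termination
  by (relation "measure (\<lambda>(t, m, n). length n - length m)")
     (auto simp: strict_prefix_def prefix_def)

definition lt_step :: "('s,'a) lts \<Rightarrow> ('s,'a,'v) tab \<Rightarrow> nat list \<Rightarrow> nat list \<Rightarrow> 's \<Rightarrow> 's \<Rightarrow> bool" where
  "lt_step T t n' n s' s \<longleftrightarrow>
     n \<in> pos t \<and> n' \<in> pos t \<and> (\<exists>i. n' = n @ [i]) \<and> s' \<in> Sn t n' \<and> s \<in> Sn t n \<and>
     (case rul t n of
        Some RBox \<Rightarrow> (\<exists>K \<Psi>. Fn t n = PBox K \<Psi> \<and> (\<exists>a \<in> K. (s, a, s') \<in> T))
      | Some (RDia f) \<Rightarrow> s' = f s
      | _ \<Rightarrow> s' = s)"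

inductive dotrel :: "('s,'a) lts \<Rightarrow> ('s,'a,'v) tab \<Rightarrow> nat list \<Rightarrow> nat list \<Rightarrow> 's \<Rightarrow> 's \<Rightarrow> bool"
  for T t where
  dot_refl: "dotrel T t n n s s"
| dot_step: "dotrel T t n' m s' s'' \<Longrightarrow> lt_step T t m n s'' s \<Longrightarrow> dotrel T t n' n s' s"

inductive sub2 :: "('s,'a) lts \<Rightarrow> ('s,'a,'v) tab \<Rightarrow> nat list \<Rightarrow> nat list \<Rightarrow> 's \<Rightarrow> 's \<Rightarrow> bool"
  and subm :: "('s,'a) lts \<Rightarrow> ('s,'a,'v) tab \<Rightarrow> nat list \<Rightarrow> 's \<Rightarrow> 's \<Rightarrow> bool"
  and subm_plus :: "('s,'a) lts \<Rightarrow> ('s,'a,'v) tab \<Rightarrow> nat list \<Rightarrow> 's \<Rightarrow> 's \<Rightarrow> bool"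
  for T t where
  subm_I: "comp_leaf t m m' \<Longrightarrow> s' \<in> Sn t m' \<Longrightarrow> sub2 T t m' m s' s \<Longrightarrow> subm T t m s' s"
| sub2_dot: "s' \<in> Sn t n' \<Longrightarrow> s \<in> Sn t n \<Longrightarrow> dotrel T t n' n s' s \<Longrightarrow> sub2 T t n' n s' s"
| sub2_comp: "s' \<in> Sn t n' \<Longrightarrow> s \<in> Sn t n \<Longrightarrow> comp_node t m \<Longrightarrow> m \<noteq> n \<Longrightarrow> m \<noteq> n' \<Longrightarrow>
      u \<in> Sn t m \<Longrightarrow> u' \<in> Sn t m \<Longrightarrow> sub2 T t n' m s' u' \<Longrightarrow> subm_plus T t m u' u \<Longrightarrow>
      dotrel T t m n u s \<Longrightarrow> sub2 T t n' n s' s"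
| subm_plus_base: "subm T t m x y \<Longrightarrow> subm_plus T t m x y"
| subm_plus_step: "subm_plus T t m x y \<Longrightarrow> subm T t m y z \<Longrightarrow> subm_plus T t m x z"

definition successful_leaf :: "('s,'a) lts \<Rightarrow> ('v \<Rightarrow> 's set) \<Rightarrow> ('s,'a,'v) tab \<Rightarrow> nat list \<Rightarrow> bool" where
  "successful_leaf T V t n \<longleftrightarrow>
     (\<exists>Z. Fn t n = PVar Z \<and> Z \<notin> ddom (Dn t n) \<and> Sn t n \<subseteq> V Z) \<or>
     (\<exists>Z. Fn t n = PNVar Z \<and> Z \<notin> ddom (Dn t n) \<and> Sn t n \<inter> V Z = {}) \<or>
     (\<exists>U Z \<Psi>. Fn t n = PVar U \<and> map_of (Dn t n) U = Some (PNu Z \<Psi>) \<and> leaf_c t n) \<or>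
     (\<exists>U Z \<Psi>. Fn t n = PVar U \<and> map_of (Dn t n) U = Some (PMu Z \<Psi>) \<and> leaf_c t n \<and>
        (\<exists>m. comp_leaf t m n \<and> wfP (subm T t m)))"

definition successful :: "('s,'a) lts \<Rightarrow> ('v \<Rightarrow> 's set) \<Rightarrow> ('s,'a,'v) tab \<Rightarrow> bool" where
  "successful T V t \<longleftrightarrow> tableau T t \<and> (\<forall>n. is_leaf t n \<longrightarrow> successful_leaf T V t n)"

section \<open>Tableau normal form\<close>

definition is_sigma_node :: "('s,'a,'v) tab \<Rightarrow> nat list \<Rightarrow> bool" where
  "is_sigma_node t p \<longleftrightarrow> rul t p = Some RSigma"

definition tnf :: "('s,'a,'v) tab \<Rightarrow> bool" where
  "tnf t \<longleftrightarrow>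
     \<comment> \<open>(i) thinning-restricted\<close>
     rul t [] \<noteq> Some RThin \<and>
     (\<forall>p i. p @ [i] \<in> pos t \<longrightarrow> (rul t (p @ [i]) = Some RSigma \<longleftrightarrow> rul t p = Some RThin)) \<and>
     \<comment> \<open>(ii) unfolding-limited\<close>
     (\<forall>p \<in> pos t. \<forall>U \<in> ddom (Dn t p).
        \<exists>!q. q \<in> pos t \<and> Fn t q = PVar U \<and> rul t q = Some RUn) \<and>
     \<comment> \<open>(iii) irredundant\<close>
     (\<forall>p \<in> pos t. rul t p = Some ROr \<longrightarrow> Sn t (p @ [0]) \<inter> Sn t (p @ [1]) = {})"

end

theory Submission
  imports Defs
begin

text \<open>For a fixpoint-free formula the tableau can simply follow the syntax of the formula:
  conjunctions and boxes are decomposed as they stand, a disjunction splits S into the states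
  satisfying the left disjunct and the rest (which makes the split disjoint), and a diamond
  chooses for each state a successor satisfying the body.  The inclusion of the current set
  in the semantics of the current formula is preserved downwards, so every leaf is an atom
  Z or \<not>Z satisfied by its set.  No fixpoint rule is ever used, so all definition lists
  stay empty and the conditions on definitional constants, companions and thinning hold
  vacuously.\<close>

lemma sem_fdisj [simp]: "sem T V (fdisj \<phi> \<psi>) = sem T V \<phi> \<union> sem T V \<psi>"
  by (auto simp: fdisj_def)

lemma sem_fdia [simp]:
  "sem T V (fdia K \<phi>) = {s. \<exists>a s'. a \<in> K \<and> (s, a, s') \<in> T \<and> s' \<in> sem T V \<phi>}"
  by (auto simp: fdia_def)

definition dia_witness :: "('s,'a) lts \<Rightarrow> ('v \<Rightarrow> 's set) \<Rightarrow> 'a set \<Rightarrow> ('a,'v) pnf \<Rightarrow> 's \<Rightarrow> 's" where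
  "dia_witness T V K \<psi> s = (SOME s'. \<exists>a \<in> K. (s, a, s') \<in> T \<and> s' \<in> sem T V (to_fml \<psi>))"

lemma dia_witness:
  assumes "s \<in> sem T V (to_fml (PDia K \<psi>))"
  shows "\<exists>a \<in> K. (s, a, dia_witness T V K \<psi> s) \<in> T \<and> dia_witness T V K \<psi> s \<in> sem T V (to_fml \<psi>)"
proof -
  from assms have "\<exists>s'. \<exists>a \<in> K. (s, a, s') \<in> T \<and> s' \<in> sem T V (to_fml \<psi>)" by auto
  then show ?thesis unfolding dia_witness_def by (rule someI_ex)
qed

primrec syntax_tab :: "('s,'a) lts \<Rightarrow> ('v \<Rightarrow> 's set) \<Rightarrow> ('a,'v) pnf \<Rightarrow> 's set \<Rightarrow> ('s,'a,'v) tab" where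
  "syntax_tab T V (PVar Z) S = Nd (S, [], PVar Z) None []"
| "syntax_tab T V (PNVar Z) S = Nd (S, [], PNVar Z) None []"
| "syntax_tab T V (PConj \<phi> \<psi>) S =
     Nd (S, [], PConj \<phi> \<psi>) (Some RAnd) [syntax_tab T V \<phi> S, syntax_tab T V \<psi> S]"
| "syntax_tab T V (PDisj \<phi> \<psi>) S = Nd (S, [], PDisj \<phi> \<psi>) (Some ROr)
     [syntax_tab T V \<phi> (S \<inter> sem T V (to_fml \<phi>)), syntax_tab T V \<psi> (S - sem T V (to_fml \<phi>))]"
| "syntax_tab T V (PBox K \<phi>) S =
     Nd (S, [], PBox K \<phi>) (Some RBox) [syntax_tab T V \<phi> (succs T K S)]"
| "syntax_tab T V (PDia K \<phi>) S = Nd (S, [], PDia K \<phi>) (Some (RDia (dia_witness T V K \<phi>)))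
     [syntax_tab T V \<phi> (dia_witness T V K \<phi> ` S)]"
| \<comment> \<open>junk leaves: fixpoint formulas are excluded by hypothesis\<close>
  "syntax_tab T V (PNu Z \<phi>) S = Nd (S, [], PNu Z \<phi>) None []"
| "syntax_tab T V (PMu Z \<phi>) S = Nd (S, [], PMu Z \<phi>) None []"

lemma seq_of_syntax_tab [simp]: "seq_of (syntax_tab T V \<phi> S) = (S, [], \<phi>)"
  by (cases \<phi>) auto

fun plain_node :: "('s,'a) lts \<Rightarrow> ('v \<Rightarrow> 's set) \<Rightarrow> ('s,'a,'v) tab \<Rightarrow> bool" where
  "plain_node T V (Nd (S, \<Delta>, \<Phi>) r ts) \<longleftrightarrow>
     \<Delta> = [] \<and> r \<notin> {Some RSigma, Some RThin, Some RUn} \<and> (r = None \<longleftrightarrow> ts = []) \<and>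
     (\<forall>\<rho>. r = Some \<rho> \<longrightarrow> rule_inst T (S, \<Delta>, \<Phi>) \<rho> (map seq_of ts)) \<and>
     (ts = [] \<longrightarrow> (\<exists>Z. (\<Phi> = PVar Z \<and> S \<subseteq> V Z) \<or> (\<Phi> = PNVar Z \<and> S \<inter> V Z = {}))) \<and>
     (r = Some ROr \<longrightarrow> fst (seq_of (ts ! 0)) \<inter> fst (seq_of (ts ! 1)) = {})"

definition all_nodes :: "(('s,'a,'v) tab \<Rightarrow> bool) \<Rightarrow> ('s,'a,'v) tab \<Rightarrow> bool" where
  "all_nodes P t \<longleftrightarrow> (\<forall>p \<in> pos t. P (the (subt t p)))"

lemma all_nodesI:
  assumes "P (Nd l r ts)" and "\<And>u. u \<in> set ts \<Longrightarrow> all_nodes P u"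
  shows "all_nodes P (Nd l r ts)"
  unfolding all_nodes_def
proof
  fix p assume p: "p \<in> pos (Nd l r ts)"
  show "P (the (subt (Nd l r ts) p))"
  proof (cases p)
    case Nil
    then show ?thesis using assms(1) by simp
  next
    case (Cons i q)
    with p have i: "i < length ts" "q \<in> pos (ts ! i)"
      by (auto simp: pos_def split: if_splits)
    then have "all_nodes P (ts ! i)" using assms(2) by simp
    then show ?thesis using i Cons unfolding all_nodes_def by simp
  qed
qed

lemma all_nodesD:
  assumes "all_nodes P t" and "p \<in> pos t"
  shows "P (Nd (lab t p) (rul t p) (kids t p))"
proof -
  obtain u where "subt t p = Some u" using assms(2) by (auto simp: pos_def)
  moreover obtain l r ts where "u = Nd l r ts" by (cases u)
  ultimately have "subt t p = Some (Nd l r ts)" by simp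
  then show ?thesis using assms unfolding all_nodes_def lab_def rul_def kids_def by force
qed

lemma lab_eq: "lab t p = (Sn t p, Dn t p, Fn t p)"
  by (simp add: Sn_def Dn_def Fn_def)

lemma subt_append: "subt t (p @ q) = Option.bind (subt t p) (\<lambda>u. subt u q)"
  by (induction t p rule: subt.induct) auto

lemma pos_parent: "p @ [i] \<in> pos t \<Longrightarrow> p \<in> pos t"
  by (cases "subt t p") (auto simp: pos_def subt_append)

lemma lab_child:
  assumes "p \<in> pos t" and "i < length (kids t p)"
  shows "lab t (p @ [i]) = seq_of (kids t p ! i)"
proof -
  obtain u where "subt t p = Some u" using assms(1) by (auto simp: pos_def)
  moreover obtain l r ts where "u = Nd l r ts" by (cases u)
  ultimately have "subt t p = Some (Nd l r ts)" by simp
  then show ?thesis using assms by (auto simp: subt_append lab_def kids_def)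
qed

lemma all_nodes_plain_syntax_tab:
  "fixpoint_free \<Phi> \<Longrightarrow> S \<subseteq> sem T V (to_fml \<Phi>) \<Longrightarrow> all_nodes (plain_node T V) (syntax_tab T V \<Phi> S)"
proof (induction \<Phi> arbitrary: S)
  case (PConj \<phi> \<psi>)
  then show ?case by (auto intro!: all_nodesI simp: rule_inst_def)
next
  case (PDisj \<phi> \<psi>)
  then have "S - sem T V (to_fml \<phi>) \<subseteq> sem T V (to_fml \<psi>)" by auto
  with PDisj show ?case
    by (simp only: syntax_tab.simps, intro all_nodesI) (auto simp: rule_inst_def)
next
  case (PBox K \<phi>)
  then have "succs T K S \<subseteq> sem T V (to_fml \<phi>)" by (auto simp: succs_def)
  with PBox show ?case
    by (simp only: syntax_tab.simps, intro all_nodesI) (auto simp: rule_inst_def)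
next
  case (PDia K \<phi>)
  have witness: "\<exists>a \<in> K. (s, a, dia_witness T V K \<phi> s) \<in> T \<and> dia_witness T V K \<phi> s \<in> sem T V (to_fml \<phi>)"
    if "s \<in> S" for s
    using that PDia.prems(2) by (intro dia_witness) blast
  then have "dia_witness T V K \<phi> ` S \<subseteq> sem T V (to_fml \<phi>)" by blast
  with PDia witness show ?case
    by (simp only: syntax_tab.simps, intro all_nodesI) (auto simp: rule_inst_def)
qed (auto intro!: all_nodesI)

context
  fixes T :: "('s,'a) lts" and V :: "'v \<Rightarrow> 's set" and t :: "('s,'a,'v) tab"
  assumes plain: "all_nodes (plain_node T V) t"
begin

lemma plain_node_at: "p \<in> pos t \<Longrightarrow> plain_node T V (Nd (Sn t p, Dn t p, Fn t p) (rul t p) (kids t p))"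
  using all_nodesD[OF plain] by (simp only: lab_eq)

lemma deflist_empty: "p \<in> pos t \<Longrightarrow> Dn t p = []"
  using plain_node_at by simp

lemma tableau_if_plain: "tableau T t"
  unfolding tableau_def
proof (intro conjI ballI allI impI)
  show "Dn t [] = []" by (simp add: deflist_empty pos_def)
next
  fix p assume "p \<in> pos t"
  then show "seq_ok (lab t p)"
    unfolding lab_eq using deflist_empty by (simp add: seq_ok_def deflist_ok_def ddom_def)
next
  fix p assume "p \<in> pos t"
  then show "(rul t p = None) = (kids t p = [])" using plain_node_at by simp
next
  fix p \<rho> assume "p \<in> pos t" "rul t p = Some \<rho>"
  then show "rule_inst T (lab t p) \<rho> (map seq_of (kids t p))"
    unfolding lab_eq using plain_node_at[of p] by auto
next
  fix p assume "is_leaf t p"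
  then show "terminal T t p"
    using plain_node_at[of p] by (auto simp: is_leaf_def terminal_def ddom_def)
qed

lemma successful_if_plain: "successful T V t"
  unfolding successful_def
proof (intro conjI allI impI tableau_if_plain)
  fix p assume "is_leaf t p"
  then show "successful_leaf T V t p"
    using plain_node_at[of p] by (auto simp: is_leaf_def successful_leaf_def ddom_def)
qed

lemma tnf_if_plain: "tnf t"
  unfolding tnf_def
proof (intro conjI allI impI ballI)
  show "rul t [] \<noteq> Some RThin" using plain_node_at[of "[]"] by (simp add: pos_def)
next
  fix p i assume "p @ [i] \<in> pos t"
  then show "(rul t (p @ [i]) = Some RSigma) = (rul t p = Some RThin)"
    using plain_node_at pos_parent by fastforce
next
  fix p U assume "p \<in> pos t" "U \<in> ddom (Dn t p)"
  then show "\<exists>!q. q \<in> pos t \<and> Fn t q = PVar U \<and> rul t q = Some RUn"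
    using deflist_empty by (simp add: ddom_def)
next
  fix p assume p: "p \<in> pos t" "rul t p = Some ROr"
  from p(1) have node: "plain_node T V (Nd (Sn t p, Dn t p, Fn t p) (rul t p) (kids t p))"
    by (rule plain_node_at)
  with p have "length (kids t p) = 2" by (auto simp: rule_inst_def)
  with node p show "Sn t (p @ [0]) \<inter> Sn t (p @ [1]) = {}"
    by (simp add: Sn_def lab_child)
qed

end

theorem lemma42:
  fixes T :: "('s, 'a) lts" and V :: "'v::countable \<Rightarrow> 's set"
    and \<Phi> :: "('a, 'v) pnf" and S :: "'s set"
  assumes "infinite (UNIV :: 'v set)"
    and "fixpoint_free \<Phi>"
    and "well_formed (to_fml \<Phi>)"
    and "S \<subseteq> sem T V (to_fml \<Phi>)"
  shows "\<exists>t. successful T V t \<and> tnf t \<and> lab t [] = (S, [], \<Phi>)"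
proof -
  have plain: "all_nodes (plain_node T V) (syntax_tab T V \<Phi> S)"
    using assms(2,4) by (rule all_nodes_plain_syntax_tab)
  have "lab (syntax_tab T V \<Phi> S) [] = (S, [], \<Phi>)" by (simp add: lab_def)
  with successful_if_plain[OF plain] tnf_if_plain[OF plain] show ?thesis by blast
qed

end
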